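(* For each integer $d \ge 2$ and each prime number $p$, there exists $c\in\mathbb{C}$ such that every critical point of the rational map $f(z) = z^{-d} + c$ on $\mathbb{P}^1_{\mathbb{C}}$ has exact period $p$.
   Context: The critical points of $f(z)=z^{-d}+c$ are $0$ and $\infty$. A point $P$ has exact period $p$ if $f^p(P)=P$ and $f^j(P)\neq P$ for $0<j<p$. *)

theory Defs
  imports "HOL-Analysis.Analysis"
begin

datatype csphere = Fin complex | Infty

fun chart :: "csphere \<Rightarrow> csphere \<Rightarrow> complex" where
  "chart (Fin q) (Fin z) = z - q"
| "chart (Fin q) Infty = 0"
| "chart Infty (Fin z) = inverse z"
| "chart Infty Infty = 0"

fun chart_inv :: "csphere \<Rightarrow> complex \<Rightarrow> csphere" where
  "chart_inv (Fin q) w = Fin (w + q)"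
| "chart_inv Infty w = (if w = 0 then Infty else Fin (inverse w))"

definition critical_point :: "(csphere \<Rightarrow> csphere) \<Rightarrow> csphere \<Rightarrow> bool" where
  "critical_point F P \<longleftrightarrow> deriv (\<lambda>w. chart (F P) (F (chart_inv P w))) 0 = 0"

fun fdc :: "nat \<Rightarrow> complex \<Rightarrow> csphere \<Rightarrow> csphere" where
  "fdc d c Infty = Fin c"
| "fdc d c (Fin z) = (if z = 0 then Infty else Fin (inverse (z ^ d) + c))"

definition exact_period :: "('a \<Rightarrow> 'a) \<Rightarrow> 'a \<Rightarrow> nat \<Rightarrow> bool" where
  "exact_period F P p \<longleftrightarrow> (F ^^ p) P = P \<and> (\<forall>j. 0 < j \<and> j < p \<longrightarrow> (F ^^ j) P \<noteq> P)"

end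

theory Submission
  imports Defs "HOL-Computational_Algebra.Fundamental_Theorem_Algebra"
begin

text \<open>The only critical points of f(z) = z^-d + c are 0 and \<infinity>, and f(0) = \<infinity>, so both
  have exact period p as soon as f^p(0) = 0; for prime p this only needs f(0) \<noteq> 0.
  Viewed as polynomials in c, the homogeneous coordinates f^n(0) = [X_n : Y_n]
  (zero_orbit_num, zero_orbit_den) satisfy X_0 = 0, Y_0 = 1, X_(n+1) = Y_n^d + c X_n^d,
  Y_(n+1) = X_n^d, and deg X_(n+2) = 1 + d deg X_(n+1). Hence X_p is nonconstant for
  p \<ge> 2, and any root c of X_p does the job.\<close>

lemma funpow_gcd_fixpoint:
  assumes "(f ^^ m) x = x" and "(f ^^ n) x = x"
  shows "(f ^^ gcd m n) x = x"
  using assms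
proof (induction m n rule: gcd_nat_induct)
  case (step m n)
  have "(f ^^ (m mod n)) x = x"
    using funpow_mod_eq[where f=f and n=n and m=m] step.prems by simp
  with step show ?case by (simp add: gcd_non_0_nat)
qed simp

lemma exact_period_prime:
  assumes "prime (p::nat)" and "(f ^^ p) x = x" and "f x \<noteq> x"
  shows "exact_period f x p"
  unfolding exact_period_def
proof (intro conjI allI impI)
  fix j assume j: "0 < j \<and> j < p"
  show "(f ^^ j) x \<noteq> x"
  proof
    assume "(f ^^ j) x = x"
    moreover have "gcd j p = 1"
      using j assms(1) by (metis coprime_commute coprime_iff_gcd_eq_1 dvd_imp_le not_le
          prime_imp_coprime)
    ultimately show False
      using funpow_gcd_fixpoint[where m=j and n=p and f=f] assms(2,3) by simp
  qed
qed (rule assms(2))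

definition hom_point :: "complex \<times> complex \<Rightarrow> csphere" where
  "hom_point v = (if snd v = 0 then Infty else Fin (fst v / snd v))"

lemma fdc_hom_point:
  assumes "v \<noteq> (0, 0)" and "d \<ge> 1"
  shows "fdc d c (hom_point v) = hom_point ((snd v) ^ d + c * (fst v) ^ d, (fst v) ^ d)"
  using assms by (cases v) (auto simp: hom_point_def field_simps power_divide)

fun zero_orbit_coords :: "nat \<Rightarrow> nat \<Rightarrow> complex poly \<times> complex poly" where
  "zero_orbit_coords d 0 = (0, 1)"
| "zero_orbit_coords d (Suc n) =
    ((snd (zero_orbit_coords d n)) ^ d + [:0, 1:] * (fst (zero_orbit_coords d n)) ^ d,
     (fst (zero_orbit_coords d n)) ^ d)"

abbreviation zero_orbit_num :: "nat \<Rightarrow> nat \<Rightarrow> complex poly" where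
  "zero_orbit_num d n \<equiv> fst (zero_orbit_coords d n)"

abbreviation zero_orbit_den :: "nat \<Rightarrow> nat \<Rightarrow> complex poly" where
  "zero_orbit_den d n \<equiv> snd (zero_orbit_coords d n)"

lemma zero_orbit_coords_nonzero:
  assumes "d \<ge> 1"
  shows "(poly (zero_orbit_num d n) c, poly (zero_orbit_den d n) c) \<noteq> (0, 0)"
  using assms by (induction n) (auto simp: poly_power power_0_left)

lemma fdc_funpow_zero:
  assumes "d \<ge> 1"
  shows "(fdc d c ^^ n) (Fin 0) = hom_point (poly (zero_orbit_num d n) c, poly (zero_orbit_den d n) c)"
proof (induction n)
  case 0
  then show ?case by (simp add: hom_point_def)
next
  case (Suc n)
  then show ?case
    using fdc_hom_point[OF zero_orbit_coords_nonzero[OF assms, where n=n and c=c] assms, where c=c]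
    by (simp add: poly_power)
qed

lemma fdc_funpow_zero_at_root:
  assumes "d \<ge> 1" and "poly (zero_orbit_num d n) c = 0"
  shows "(fdc d c ^^ n) (Fin 0) = Fin 0"
  using fdc_funpow_zero[OF assms(1), where c=c and n=n] zero_orbit_coords_nonzero[OF assms(1), of n c] assms(2)
  by (simp add: hom_point_def)

lemma zero_orbit_num_Suc_Suc:
  "zero_orbit_num d (Suc (Suc n)) = zero_orbit_num d n ^ (d * d) + [:0, 1:] * zero_orbit_num d (Suc n) ^ d"
  by (simp add: power_mult)

lemma degree_zero_orbit_num_Suc_Suc:
  assumes "zero_orbit_num d (Suc n) \<noteq> 0"
    and "d * degree (zero_orbit_num d n) \<le> degree (zero_orbit_num d (Suc n))"
  shows "degree (zero_orbit_num d (Suc (Suc n))) = 1 + d * degree (zero_orbit_num d (Suc n))"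
proof -
  let ?A = "zero_orbit_num d n" and ?B = "zero_orbit_num d (Suc n)"
  have deg_lead: "degree ([:0, 1:] * ?B ^ d) = 1 + d * degree ?B"
    using assms(1) by (simp add: degree_mult_eq degree_power_eq)
  have "degree (?A ^ (d * d)) \<le> d * (d * degree ?A)"
    using degree_power_le[of ?A "d * d"] by (simp add: mult_ac)
  also have "\<dots> \<le> d * degree ?B"
    using assms(2) by simp
  finally have "degree (?A ^ (d * d)) < degree ([:0, 1:] * ?B ^ d)"
    using deg_lead by simp
  then show ?thesis
    using zero_orbit_num_Suc_Suc degree_add_eq_right deg_lead by metis
qed

lemma zero_orbit_num_growth:
  assumes "d \<ge> 1"
  shows "zero_orbit_num d (Suc n) \<noteq> 0 \<and> d * degree (zero_orbit_num d n) \<le> degree (zero_orbit_num d (Suc n))"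
proof (induction n)
  case 0
  then show ?case using assms by (simp add: power_0_left)
next
  case (Suc n)
  then have "degree (zero_orbit_num d (Suc (Suc n))) = 1 + d * degree (zero_orbit_num d (Suc n))"
    by (intro degree_zero_orbit_num_Suc_Suc) auto
  then show ?case
    by (metis add_is_0 degree_0 le_add2 one_neq_zero)
qed

lemma zero_orbit_num_has_root:
  assumes "d \<ge> 1" and "n \<ge> 2"
  shows "\<exists>c. poly (zero_orbit_num d n) c = 0"
proof -
  obtain m where n: "n = Suc (Suc m)"
    using assms(2) by (metis add_2_eq_Suc le_Suc_ex)
  have "degree (zero_orbit_num d n) \<ge> 1"
    unfolding n using zero_orbit_num_growth[OF assms(1), of m]
    by (subst degree_zero_orbit_num_Suc_Suc) auto
  then show ?thesis
    using fundamental_theorem_of_algebra constant_degree by (metis not_one_le_zero)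
qed

lemma not_critical_point_fdc_nonzero:
  assumes "z \<noteq> 0" and "d \<ge> 1"
  shows "\<not> critical_point (fdc d c) (Fin z)"
proof -
  define g where "g = (\<lambda>w. chart (fdc d c (Fin z)) (fdc d c (chart_inv (Fin z) w)))"
  define h where "h = (\<lambda>w::complex. inverse ((w + z) ^ d) - inverse (z ^ d))"
  define D where "D = - (of_nat d * z ^ (d - 1)) / (z ^ d)\<^sup>2"
  have "(h has_field_derivative D) (at 0)"
    unfolding h_def D_def using assms
    by (auto intro!: derivative_eq_intros simp: power2_eq_square field_simps)
  then have "(g has_field_derivative D) (at 0)"
  proof (rule has_field_derivative_transform_within_open[of _ _ _ "ball 0 (norm z)"])
    fix w :: complex assume "w \<in> ball 0 (norm z)"
    then have "w + z \<noteq> 0"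
      by (metis add_eq_0_iff dist_0_norm mem_ball norm_minus_cancel order_less_irrefl)
    then show "h w = g w" using assms by (simp add: g_def h_def)
  qed (use assms in auto)
  moreover have "D \<noteq> 0"
    using assms by (simp add: D_def)
  ultimately have "deriv g 0 \<noteq> 0"
    by (simp add: DERIV_imp_deriv)
  then show ?thesis
    unfolding critical_point_def g_def .
qed

lemma critical_point_fdc_cases:
  assumes "d \<ge> 1" and "critical_point (fdc d c) P"
  shows "P = Fin 0 \<or> P = Infty"
  using assms not_critical_point_fdc_nonzero by (cases P) auto

theorem mainTheorem13:
  fixes d p :: nat
  assumes "d \<ge> 2" and "prime p"
  shows "\<exists>c::complex. \<forall>P. critical_point (fdc d c) P \<longrightarrow> exact_period (fdc d c) P p"
proof -
  have d: "d \<ge> 1" using assms(1) by simp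
  obtain c where c: "poly (zero_orbit_num d p) c = 0"
    using zero_orbit_num_has_root[OF d] prime_ge_2_nat[OF assms(2)] by blast
  let ?f = "fdc d c"
  have zero_fixed: "(?f ^^ p) (Fin 0) = Fin 0"
    using fdc_funpow_zero_at_root[OF d c] .
  then have "exact_period ?f (Fin 0) p"
    by (intro exact_period_prime assms(2)) auto
  moreover have "(?f ^^ p) Infty = Infty"
    using zero_fixed funpow_swap1[of ?f p "Fin 0"] by simp
  then have "exact_period ?f Infty p"
    by (intro exact_period_prime assms(2)) auto
  ultimately show ?thesis
    using critical_point_fdc_cases[OF d] by blast
qed

end
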